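(* Let $\mathscr{S}=(T,S,\sigma,\mu,\tau_T,\tau_S)$ be a relaxed scenario and $\mathscr{G}=(G_{<}(\mathscr{S}),G_{=}(\mathscr{S}),G_{>}(\mathscr{S}),\sigma)$. Then $T$ agrees with $(\mathscr{R}_T(\mathscr{G}),\mathscr{F}_T(\mathscr{G}))$ and $S$ agrees with $(\mathscr{R}_S(\mathscr{G}),\mathscr{F}_S(\mathscr{G}))$.
   Context: All trees are planted phylogenetic trees: a tree $T$ has a distinguished vertex $0_T$ of degree $1$ whose unique neighbor $\rho_T$ is the root, and every vertex other than $0_T$ and the leaves $L(T)$ has at least two children. For $x,y\in V(T)$ write $y\preceq_T x$ if $x$ lies on the path from $0_T$ to $y$; edges are written $uv$ with $v\prec_T u$. $\mathrm{lca}_T$ denotes the last common ancestor. A time map for $T$ is $\tau_T\colon V(T)\to\mathbb{R}$ with $\tau_T(x)<\tau_T(y)$ whenever $x\prec_T y$. A relaxed scenario $\mathscr{S}=(T,S,\sigma,\mu,\tau_T,\tau_S)$ consists of a gene tree $T$ with time map $\tau_T$, a species tree $S$ with time map $\tau_S$, a map $\sigma\colon L(T)\to M$ with $M\subseteq L(S)$, and a map $\mu\colon V(T)\to V(S)\cup E(S)$ such that (S0) $\mu(x)=0_S$ iff $x=0_T$; (S1) $\mu(x)\in L(S)$ iff $x\in L(T)$, in which case $\mu(x)=\sigma(x)$; (S2) if $\mu(x)\in V(S)$ then $\tau_S(\mu(x))=\tau_T(x)$; (S3) if $\mu(x)=uv\in E(S)$ then $\tau_S(v)<\tau_T(x)<\tau_S(u)$.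 The graphs $G_{=}(\mathscr{S})$, $G_{<}(\mathscr{S})$, $G_{>}(\mathscr{S})$ have vertex set $L(T)$, and for distinct $x,y$ the pair $xy$ is an edge of $G_{=}(\mathscr{S})$, $G_{<}(\mathscr{S})$, resp. $G_{>}(\mathscr{S})$ iff $\tau_T(\mathrm{lca}_T(x,y))$ is $=$, $<$, resp. $>$ than $\tau_S(\mathrm{lca}_S(\sigma(x),\sigma(y)))$. A tree displays the triple $xy|z$ if $\mathrm{lca}(x,y)\prec\mathrm{lca}(x,z)=\mathrm{lca}(y,z)$. A tree agrees with $(\mathscr{R},\mathscr{F})$ if it displays all triples of $\mathscr{R}$ and none of $\mathscr{F}$. For $\mathscr{G}=(G_<,G_=,G_>,\sigma)$ on vertex set $L$: $\mathscr{R}_T(\mathscr{G})$ contains $xy|z$ for $x,y,z\in L$ if ($xy\in E(G_<)$ and $xz,yz\notin E(G_<)$) or ($xz,yz\in E(G_>)$ and $xy\notin E(G_>)$); $\mathscr{F}_T(\mathscr{G})$ contains $xz|y$ and $yz|x$ if $xz,yz\in E(G_=)$ and $xy\notin E(G_=)$; $\mathscr{R}_S(\mathscr{G})$ contains $XY|Z$ if there are $x,y,z\in L$ with pairwise distinct colors $X=\sigma(x),Y=\sigma(y),Z=\sigma(z)$ and ($xz,yz\in E(G_<)$ and $xy\notin E(G_<)$) or ($xy\in E(G_>)$ and $xz,yz\notin E(G_>)$); $\mathscr{F}_S(\mathscr{G})$ contains $XZ|Y$ and $YZ|X$ if there are $x,y,z\in L$ with pairwise distinct colors $X,Y,Z$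 as before and $xz,yz\in E(G_=)$, $xy\notin E(G_=)$. *)

theory Defs
  imports Complex_Main
begin

text \<open>A rooted tree is given by a vertex set V, a set E of directed edges (u,v) with
  u the parent of v, and the planted vertex r0 (the vertex 0_T).
  y \<preceq> x (x is an ancestor of y) iff (x,y) \<in> E^*; y \<prec> x iff (x,y) \<in> E^+.\<close>

definition children :: "('v \<times> 'v) set \<Rightarrow> 'v \<Rightarrow> 'v set" where
  "children E v = {w. (v, w) \<in> E}"

definition leaves :: "'v set \<Rightarrow> ('v \<times> 'v) set \<Rightarrow> 'v set" where
  "leaves V E = {v \<in> V. children E v = {}}"

definition planted_phylo_tree :: "'v set \<Rightarrow> ('v \<times> 'v) set \<Rightarrow> 'v \<Rightarrow> bool" where
  "planted_phylo_tree V E r0 \<longleftrightarrow>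
     finite V \<and> E \<subseteq> V \<times> V \<and> r0 \<in> V \<and>
     (\<forall>v\<in>V. (r0, v) \<in> E\<^sup>*) \<and>
     (\<forall>u. (u, r0) \<notin> E) \<and>
     (\<forall>v\<in>V - {r0}. \<exists>!u. (u, v) \<in> E) \<and>
     acyclic E \<and>
     card (children E r0) = 1 \<and>
     (\<forall>v\<in>V - {r0} - leaves V E. card (children E v) \<ge> 2)"

definition lca :: "'v set \<Rightarrow> ('v \<times> 'v) set \<Rightarrow> 'v \<Rightarrow> 'v \<Rightarrow> 'v" where
  "lca V E x y = (THE z. z \<in> V \<and> (z, x) \<in> E\<^sup>* \<and> (z, y) \<in> E\<^sup>* \<and>
      (\<forall>w\<in>V. (w, x) \<in> E\<^sup>* \<and> (w, y) \<in> E\<^sup>* \<longrightarrow> (w, z) \<in> E\<^sup>*))"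

definition time_map :: "'v set \<Rightarrow> ('v \<times> 'v) set \<Rightarrow> ('v \<Rightarrow> real) \<Rightarrow> bool" where
  "time_map V E \<tau> \<longleftrightarrow> (\<forall>x\<in>V. \<forall>y\<in>V. (y, x) \<in> E\<^sup>+ \<longrightarrow> \<tau> x < \<tau> y)"

text \<open>Relaxed scenario. The reconciliation map \<mu> takes values in V(S) (Inl v) or E(S)
  (Inr (u,v), an edge uv with v \<prec> u).\<close>
definition relaxed_scenario ::
  "'g set \<Rightarrow> ('g \<times> 'g) set \<Rightarrow> 'g \<Rightarrow> ('g \<Rightarrow> real) \<Rightarrow>
   's set \<Rightarrow> ('s \<times> 's) set \<Rightarrow> 's \<Rightarrow> ('s \<Rightarrow> real) \<Rightarrow>
   ('g \<Rightarrow> 's) \<Rightarrow> ('g \<Rightarrow> 's + ('s \<times> 's)) \<Rightarrow> bool" where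
  "relaxed_scenario VT ET rT \<tau>T VS ES rS \<tau>S \<sigma> \<mu> \<longleftrightarrow>
     planted_phylo_tree VT ET rT \<and> planted_phylo_tree VS ES rS \<and>
     time_map VT ET \<tau>T \<and> time_map VS ES \<tau>S \<and>
     (\<forall>x\<in>leaves VT ET. \<sigma> x \<in> leaves VS ES) \<and>
     (\<forall>x\<in>VT. \<mu> x \<in> Inl ` VS \<union> Inr ` ES) \<and>
     (\<forall>x\<in>VT. \<mu> x = Inl rS \<longleftrightarrow> x = rT) \<and>
     (\<forall>x\<in>VT. (\<exists>v\<in>leaves VS ES. \<mu> x = Inl v) \<longleftrightarrow> x \<in> leaves VT ET) \<and>
     (\<forall>x\<in>leaves VT ET. \<mu> x = Inl (\<sigma> x)) \<and>
     (\<forall>x\<in>VT. \<forall>v. \<mu> x = Inl v \<longrightarrow> \<tau>S v = \<tau>T x) \<and>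
     (\<forall>x\<in>VT. \<forall>u v. \<mu> x = Inr (u, v) \<longrightarrow> \<tau>S v < \<tau>T x \<and> \<tau>T x < \<tau>S u)"

definition G_rel ::
  "(real \<Rightarrow> real \<Rightarrow> bool) \<Rightarrow> 'g set \<Rightarrow> ('g \<times> 'g) set \<Rightarrow> ('g \<Rightarrow> real) \<Rightarrow>
   's set \<Rightarrow> ('s \<times> 's) set \<Rightarrow> ('s \<Rightarrow> real) \<Rightarrow> ('g \<Rightarrow> 's) \<Rightarrow> ('g \<times> 'g) set" where
  "G_rel cmp VT ET \<tau>T VS ES \<tau>S \<sigma> =
     {(x, y). x \<in> leaves VT ET \<and> y \<in> leaves VT ET \<and> x \<noteq> y \<and>
        cmp (\<tau>T (lca VT ET x y)) (\<tau>S (lca VS ES (\<sigma> x) (\<sigma> y)))}"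

abbreviation G_less where "G_less \<equiv> G_rel (<)"
abbreviation G_eq where "G_eq \<equiv> G_rel (=)"
abbreviation G_greater where "G_greater \<equiv> G_rel (>)"

text \<open>Triples xy|z are encoded as (x, y, z); triples are on pairwise distinct elements.\<close>
definition displays :: "'v set \<Rightarrow> ('v \<times> 'v) set \<Rightarrow> 'v \<times> 'v \<times> 'v \<Rightarrow> bool" where
  "displays V E t = (case t of (x, y, z) \<Rightarrow>
     (lca V E x z, lca V E x y) \<in> E\<^sup>+ \<and> lca V E x z = lca V E y z)"

definition agrees :: "'v set \<Rightarrow> ('v \<times> 'v) set \<Rightarrow> ('v \<times> 'v \<times> 'v) set \<Rightarrow> ('v \<times> 'v \<times> 'v) set \<Rightarrow> bool" where
  "agrees V E R F \<longleftrightarrow> (\<forall>t\<in>R. displays V E t) \<and> (\<forall>t\<in>F. \<not> displays V E t)"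

definition R_T :: "'g set \<Rightarrow> ('g \<times> 'g) set \<Rightarrow> ('g \<times> 'g) set \<Rightarrow> ('g \<times> 'g) set \<Rightarrow> ('g \<times> 'g \<times> 'g) set" where
  "R_T L Gl Ge Gg = {(x, y, z). x \<in> L \<and> y \<in> L \<and> z \<in> L \<and> x \<noteq> y \<and> x \<noteq> z \<and> y \<noteq> z \<and>
     (((x, y) \<in> Gl \<and> (x, z) \<notin> Gl \<and> (y, z) \<notin> Gl) \<or>
      ((x, z) \<in> Gg \<and> (y, z) \<in> Gg \<and> (x, y) \<notin> Gg))}"

definition F_T :: "'g set \<Rightarrow> ('g \<times> 'g) set \<Rightarrow> ('g \<times> 'g) set \<Rightarrow> ('g \<times> 'g) set \<Rightarrow> ('g \<times> 'g \<times> 'g) set" where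
  "F_T L Gl Ge Gg =
     {t. \<exists>x y z. x \<in> L \<and> y \<in> L \<and> z \<in> L \<and> x \<noteq> y \<and> x \<noteq> z \<and> y \<noteq> z \<and>
        (x, z) \<in> Ge \<and> (y, z) \<in> Ge \<and> (x, y) \<notin> Ge \<and> (t = (x, z, y) \<or> t = (y, z, x))}"

definition R_S :: "'g set \<Rightarrow> ('g \<times> 'g) set \<Rightarrow> ('g \<times> 'g) set \<Rightarrow> ('g \<times> 'g) set \<Rightarrow> ('g \<Rightarrow> 's) \<Rightarrow> ('s \<times> 's \<times> 's) set" where
  "R_S L Gl Ge Gg \<sigma> =
     {t. \<exists>x y z. x \<in> L \<and> y \<in> L \<and> z \<in> L \<and>
        \<sigma> x \<noteq> \<sigma> y \<and> \<sigma> x \<noteq> \<sigma> z \<and> \<sigma> y \<noteq> \<sigma> z \<and>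
        (((x, z) \<in> Gl \<and> (y, z) \<in> Gl \<and> (x, y) \<notin> Gl) \<or>
         ((x, y) \<in> Gg \<and> (x, z) \<notin> Gg \<and> (y, z) \<notin> Gg)) \<and>
        t = (\<sigma> x, \<sigma> y, \<sigma> z)}"

definition F_S :: "'g set \<Rightarrow> ('g \<times> 'g) set \<Rightarrow> ('g \<times> 'g) set \<Rightarrow> ('g \<times> 'g) set \<Rightarrow> ('g \<Rightarrow> 's) \<Rightarrow> ('s \<times> 's \<times> 's) set" where
  "F_S L Gl Ge Gg \<sigma> =
     {t. \<exists>x y z. x \<in> L \<and> y \<in> L \<and> z \<in> L \<and>
        \<sigma> x \<noteq> \<sigma> y \<and> \<sigma> x \<noteq> \<sigma> z \<and> \<sigma> y \<noteq> \<sigma> z \<and>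
        (x, z) \<in> Ge \<and> (y, z) \<in> Ge \<and> (x, y) \<notin> Ge \<and>
        (t = (\<sigma> x, \<sigma> z, \<sigma> y) \<or> t = (\<sigma> y, \<sigma> z, \<sigma> x))}"

end

theory Submission
  imports Defs
begin

(* In a tree with a time map, d x y = \<tau> (lca x y) is an ultrametric: of d x y, d x z, d y z the two
   largest coincide. Moreover the tree displays xy|z exactly when d x y < d x z. On the leaves of T
   this yields two ultrametrics, t from the gene tree and s x y = \<tau>S (lcaS (\<sigma> x) (\<sigma> y)) from the
   species tree, and G_<, G_=, G_> record where t lies below, on, or above s. Every condition defining
   R_T and F_T then forces, respectively forbids, t x y < t x z by a three-point argument on the two
   ultrametrics; the conditions defining R_S and F_S are the same ones with t and s exchanged, which
   swaps G_< and G_>. *)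

(* Only symmetry and the strong triangle inequality: d x x need not vanish, as \<tau> (lca x x) = \<tau> x. *)
definition ultrametric_on :: "'a set \<Rightarrow> ('a \<Rightarrow> 'a \<Rightarrow> real) \<Rightarrow> bool" where
  "ultrametric_on A d \<longleftrightarrow>
     (\<forall>x\<in>A. \<forall>y\<in>A. d x y = d y x) \<and> (\<forall>x\<in>A. \<forall>y\<in>A. \<forall>z\<in>A. d x y \<le> max (d x z) (d y z))"

lemma ultrametric_on_three_points:
  assumes "ultrametric_on A d" "x \<in> A" "y \<in> A" "z \<in> A"
  shows "d y x = d x y" "d z x = d x z" "d z y = d y z"
    "d x y \<le> max (d x z) (d y z)" "d x z \<le> max (d x y) (d y z)" "d y z \<le> max (d x y) (d x z)"
  using assms unfolding ultrametric_on_def by metis+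

lemma ultrametric_on_mono: "ultrametric_on B d \<Longrightarrow> A \<subseteq> B \<Longrightarrow> ultrametric_on A d"
  unfolding ultrametric_on_def by blast

lemma ultrametric_on_compose:
  "ultrametric_on B d \<Longrightarrow> f ` A \<subseteq> B \<Longrightarrow> ultrametric_on A (\<lambda>x y. d (f x) (f y))"
  unfolding ultrametric_on_def by (simp add: image_subset_iff)

lemma rtrancl_chain_has_greatest:
  assumes "finite C" "C \<noteq> {}"
    and chain: "\<And>a b. a \<in> C \<Longrightarrow> b \<in> C \<Longrightarrow> (a, b) \<in> R\<^sup>* \<or> (b, a) \<in> R\<^sup>*"
  shows "\<exists>z\<in>C. \<forall>w\<in>C. (w, z) \<in> R\<^sup>*"
  using assms(1,2) chain
proof (induction C rule: finite_ne_induct)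
  case (singleton a)
  then show ?case by auto
next
  case (insert a F)
  then obtain z where "z \<in> F" and z: "\<forall>w\<in>F. (w, z) \<in> R\<^sup>*" by auto
  show ?case
  proof (cases "(z, a) \<in> R\<^sup>*")
    case True
    then have "\<forall>w\<in>insert a F. (w, a) \<in> R\<^sup>*" using z by (auto intro: rtrancl_trans)
    then show ?thesis by blast
  next
    case False
    then show ?thesis using z \<open>z \<in> F\<close> insert.prems by auto
  qed
qed

lemma lca_commute: "lca V E x y = lca V E y x"
  unfolding lca_def by (simp add: conj_commute conj_left_commute)

context
  fixes V :: "'v set" and E :: "('v \<times> 'v) set" and r0 :: 'v
  assumes tree: "planted_phylo_tree V E r0"
begin

lemma ancestor_in_vertices: "(a, b) \<in> E\<^sup>* \<Longrightarrow> b \<in> V \<Longrightarrow> a \<in> V"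
  using tree unfolding planted_phylo_tree_def by (auto elim: converse_rtranclE)

lemma parent_unique: "(p, x) \<in> E \<Longrightarrow> (q, x) \<in> E \<Longrightarrow> p = q"
  using tree unfolding planted_phylo_tree_def by blast

lemma ancestors_comparable:
  assumes "(b, x) \<in> E\<^sup>*" "(a, x) \<in> E\<^sup>*"
  shows "(a, b) \<in> E\<^sup>* \<or> (b, a) \<in> E\<^sup>*"
  using assms
proof (induction arbitrary: a rule: rtrancl_induct)
  case base
  then show ?case by simp
next
  case (step y x')
  from step.prems show ?case
  proof (cases rule: rtranclE)
    case base
    then show ?thesis using step.hyps by (meson rtrancl.rtrancl_into_rtrancl)
  next
    case (step p)
    then have "p = y" using parent_unique \<open>(y, x') \<in> E\<close> by blast
    then show ?thesis using step step.IH by auto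
  qed
qed

lemma ancestor_antisym: "(a, b) \<in> E\<^sup>* \<Longrightarrow> (b, a) \<in> E\<^sup>* \<Longrightarrow> a = b"
  using tree unfolding planted_phylo_tree_def acyclic_def
  by (metis rtrancl_eq_or_trancl trancl_rtrancl_trancl)

lemma lca_spec:
  assumes "x \<in> V" "y \<in> V"
  shows "lca V E x y \<in> V \<and> (lca V E x y, x) \<in> E\<^sup>* \<and> (lca V E x y, y) \<in> E\<^sup>* \<and>
    (\<forall>w\<in>V. (w, x) \<in> E\<^sup>* \<and> (w, y) \<in> E\<^sup>* \<longrightarrow> (w, lca V E x y) \<in> E\<^sup>*)"
proof -
  define C where "C = {z \<in> V. (z, x) \<in> E\<^sup>* \<and> (z, y) \<in> E\<^sup>*}"
  have "finite C" using tree unfolding C_def planted_phylo_tree_def by auto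
  moreover have "r0 \<in> C" using tree assms unfolding C_def planted_phylo_tree_def by auto
  moreover have "(a, b) \<in> E\<^sup>* \<or> (b, a) \<in> E\<^sup>*" if "a \<in> C" "b \<in> C" for a b
    using that ancestors_comparable unfolding C_def by blast
  ultimately obtain z where z: "z \<in> C" "\<forall>w\<in>C. (w, z) \<in> E\<^sup>*"
    using rtrancl_chain_has_greatest[of C E] by blast
  have "lca V E x y = z"
    unfolding lca_def
    by (rule the_equality) (use z ancestor_antisym in \<open>auto simp: C_def\<close>)
  then show ?thesis using z unfolding C_def by auto
qed

lemma lca_in_vertices: "x \<in> V \<Longrightarrow> y \<in> V \<Longrightarrow> lca V E x y \<in> V"
  and lca_ancestor_left: "x \<in> V \<Longrightarrow> y \<in> V \<Longrightarrow> (lca V E x y, x) \<in> E\<^sup>*"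
  and lca_ancestor_right: "x \<in> V \<Longrightarrow> y \<in> V \<Longrightarrow> (lca V E x y, y) \<in> E\<^sup>*"
  and lca_greatest: "x \<in> V \<Longrightarrow> y \<in> V \<Longrightarrow> (w, x) \<in> E\<^sup>* \<Longrightarrow> (w, y) \<in> E\<^sup>* \<Longrightarrow> (w, lca V E x y) \<in> E\<^sup>*"
  using lca_spec ancestor_in_vertices by blast+

lemma lca_below_lca_or_lca:
  assumes "x \<in> V" "y \<in> V" "z \<in> V"
  shows "(lca V E x z, lca V E x y) \<in> E\<^sup>* \<or> (lca V E y z, lca V E x y) \<in> E\<^sup>*"
  using ancestors_comparable[OF lca_ancestor_right lca_ancestor_right, of x z y] assms
  by (meson lca_ancestor_left lca_greatest rtrancl_trans)

lemma time_map_antimono: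
  assumes "time_map V E \<tau>" "(a, b) \<in> E\<^sup>*" "b \<in> V"
  shows "\<tau> b \<le> \<tau> a"
  using assms ancestor_in_vertices unfolding time_map_def
  by (metis order.order_iff_strict rtrancl_eq_or_trancl)

lemma ultrametric_on_lca_time:
  assumes "time_map V E \<tau>"
  shows "ultrametric_on V (\<lambda>x y. \<tau> (lca V E x y))"
  unfolding ultrametric_on_def
proof (intro conjI ballI)
  fix x y z assume "x \<in> V" "y \<in> V" "z \<in> V"
  then show "\<tau> (lca V E x y) \<le> max (\<tau> (lca V E x z)) (\<tau> (lca V E y z))"
    using lca_below_lca_or_lca time_map_antimono[OF assms] lca_in_vertices
    by (metis max.coboundedI1 max.coboundedI2)
qed (metis lca_commute)

lemma displays_iff_lca_time_less:
  assumes tm: "time_map V E \<tau>" and V: "x \<in> V" "y \<in> V" "z \<in> V"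
  shows "displays V E (x, y, z) \<longleftrightarrow> \<tau> (lca V E x y) < \<tau> (lca V E x z)"
proof
  assume "displays V E (x, y, z)"
  then show "\<tau> (lca V E x y) < \<tau> (lca V E x z)"
    using tm V lca_in_vertices unfolding displays_def time_map_def by auto
next
  assume less: "\<tau> (lca V E x y) < \<tau> (lca V E x z)"
  have "(lca V E x y, lca V E x z) \<notin> E\<^sup>*"
    using less time_map_antimono[OF tm] V lca_in_vertices by force
  then have "(lca V E x z, lca V E x y) \<in> E\<^sup>*"
    using ancestors_comparable lca_ancestor_left V by blast
  then have above: "(lca V E x z, lca V E x y) \<in> E\<^sup>+"
    using less by (metis rtrancl_eq_or_trancl order.irrefl)
  have "(lca V E x z, lca V E y z) \<in> E\<^sup>*"
    using lca_greatest above lca_ancestor_right V by (meson rtrancl_trans trancl_into_rtrancl)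
  moreover have "(lca V E y z, lca V E x z) \<in> E\<^sup>*"
    using lca_below_lca_or_lca[of x z y] \<open>(lca V E x y, lca V E x z) \<notin> E\<^sup>*\<close> V lca_commute
    by metis
  ultimately show "displays V E (x, y, z)"
    using above ancestor_antisym unfolding displays_def by auto
qed

end

definition comparison_graph ::
  "'a set \<Rightarrow> ('a \<Rightarrow> 'a \<Rightarrow> real) \<Rightarrow> ('a \<Rightarrow> 'a \<Rightarrow> real) \<Rightarrow> (real \<Rightarrow> real \<Rightarrow> bool) \<Rightarrow> ('a \<times> 'a) set"
  where "comparison_graph A t s cmp = {(x, y). x \<in> A \<and> y \<in> A \<and> x \<noteq> y \<and> cmp (t x y) (s x y)}"

lemma comparison_graph_less_swap: "comparison_graph A t s (<) = comparison_graph A s t (>)"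
  and comparison_graph_eq_swap: "comparison_graph A t s (=) = comparison_graph A s t (=)"
  unfolding comparison_graph_def by auto

lemma G_rel_eq_comparison_graph:
  "G_rel cmp VT ET \<tau>T VS ES \<tau>S \<sigma> = comparison_graph (leaves VT ET)
     (\<lambda>x y. \<tau>T (lca VT ET x y)) (\<lambda>x y. \<tau>S (lca VS ES (\<sigma> x) (\<sigma> y))) cmp"
  unfolding G_rel_def comparison_graph_def by auto

lemma R_T_comparison_graph_less:
  assumes t: "ultrametric_on A t" and s: "ultrametric_on A s"
    and "(x, y, z) \<in> R_T A (comparison_graph A t s (<)) Ge (comparison_graph A t s (>))"
  shows "t x y < t x z"
proof -
  have "x \<in> A" "y \<in> A" "z \<in> A" "x \<noteq> y" "x \<noteq> z" "y \<noteq> z"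
    and "(t x y < s x y \<and> s x z \<le> t x z \<and> s y z \<le> t y z) \<or>
         (s x z < t x z \<and> s y z < t y z \<and> t x y \<le> s x y)"
    using assms(3) unfolding R_T_def comparison_graph_def by auto
  with ultrametric_on_three_points[OF t] ultrametric_on_three_points[OF s] show ?thesis
    by (smt (verit))
qed

lemma F_T_comparison_graph_not_less:
  assumes t: "ultrametric_on A t" and s: "ultrametric_on A s"
    and "(a, b, c) \<in> F_T A Gl (comparison_graph A t s (=)) Gg"
  shows "\<not> t a b < t a c"
proof -
  obtain x y z where "x \<in> A" "y \<in> A" "z \<in> A" "x \<noteq> y"
    and "t x z = s x z" "t y z = s y z" "t x y \<noteq> s x y"
    and abc: "(a, b, c) = (x, z, y) \<or> (a, b, c) = (y, z, x)"
    using assms(3) unfolding F_T_def comparison_graph_def by auto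
  note ultrametric_on_three_points[OF t \<open>x \<in> A\<close> \<open>y \<in> A\<close> \<open>z \<in> A\<close>]
    ultrametric_on_three_points[OF s \<open>x \<in> A\<close> \<open>y \<in> A\<close> \<open>z \<in> A\<close>]
  with abc \<open>t x z = s x z\<close> \<open>t y z = s y z\<close> \<open>t x y \<noteq> s x y\<close> show ?thesis
    by (elim disjE) (auto simp: max_def split: if_splits)
qed

lemma R_S_subset_image_R_T:
  "R_S L Gl Ge Gg \<sigma> \<subseteq> (\<lambda>(x, y, z). (\<sigma> x, \<sigma> y, \<sigma> z)) ` R_T L Gg Ge Gl"
  unfolding R_S_def R_T_def by (auto simp: image_iff) blast+

lemma F_S_subset_image_F_T:
  "F_S L Gl Ge Gg \<sigma> \<subseteq> (\<lambda>(x, y, z). (\<sigma> x, \<sigma> y, \<sigma> z)) ` F_T L Gl Ge Gg"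
  unfolding F_S_def F_T_def by (auto simp: image_iff) blast+

lemma agrees_antimono: "agrees V E R F \<Longrightarrow> R' \<subseteq> R \<Longrightarrow> F' \<subseteq> F \<Longrightarrow> agrees V E R' F'"
  unfolding agrees_def by blast

lemma agrees_image_R_T_F_T:
  assumes t: "ultrametric_on A t" and s: "ultrametric_on A s"
    and displays: "\<And>x y z. x \<in> A \<Longrightarrow> y \<in> A \<Longrightarrow> z \<in> A \<Longrightarrow>
      displays V E (f x, f y, f z) \<longleftrightarrow> t x y < t x z"
  shows "agrees V E
    ((\<lambda>(x, y, z). (f x, f y, f z)) ` R_T A (comparison_graph A t s (<)) Ge (comparison_graph A t s (>)))
    ((\<lambda>(x, y, z). (f x, f y, f z)) ` F_T A Gl (comparison_graph A t s (=)) Gg)"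
  unfolding agrees_def
proof (intro conjI ballI)
  fix u assume "u \<in> (\<lambda>(x, y, z). (f x, f y, f z)) ` R_T A (comparison_graph A t s (<)) Ge (comparison_graph A t s (>))"
  then obtain x y z where "u = (f x, f y, f z)"
    and R: "(x, y, z) \<in> R_T A (comparison_graph A t s (<)) Ge (comparison_graph A t s (>))"
    by auto
  moreover have "x \<in> A" "y \<in> A" "z \<in> A"
    using R unfolding R_T_def by auto
  ultimately show "displays V E u"
    using displays R_T_comparison_graph_less[OF t s R] by simp
next
  fix u assume "u \<in> (\<lambda>(x, y, z). (f x, f y, f z)) ` F_T A Gl (comparison_graph A t s (=)) Gg"
  then obtain x y z where "u = (f x, f y, f z)"
    and F: "(x, y, z) \<in> F_T A Gl (comparison_graph A t s (=)) Gg"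
    by auto
  moreover have "x \<in> A" "y \<in> A" "z \<in> A"
    using F unfolding F_T_def by auto
  ultimately show "\<not> displays V E u"
    using displays F_T_comparison_graph_not_less[OF t s F] by simp
qed

theorem proposition2:
  fixes VT :: "'g set" and ET :: "('g \<times> 'g) set" and rT :: 'g and \<tau>T :: "'g \<Rightarrow> real"
    and VS :: "'s set" and ES :: "('s \<times> 's) set" and rS :: 's and \<tau>S :: "'s \<Rightarrow> real"
    and \<sigma> :: "'g \<Rightarrow> 's" and \<mu> :: "'g \<Rightarrow> 's + ('s \<times> 's)"
  assumes "relaxed_scenario VT ET rT \<tau>T VS ES rS \<tau>S \<sigma> \<mu>"
  defines "L \<equiv> leaves VT ET"
    and "Gl \<equiv> G_less VT ET \<tau>T VS ES \<tau>S \<sigma>"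
    and "Ge \<equiv> G_eq VT ET \<tau>T VS ES \<tau>S \<sigma>"
    and "Gg \<equiv> G_greater VT ET \<tau>T VS ES \<tau>S \<sigma>"
  shows "agrees VT ET (R_T L Gl Ge Gg) (F_T L Gl Ge Gg)
       \<and> agrees VS ES (R_S L Gl Ge Gg \<sigma>) (F_S L Gl Ge Gg \<sigma>)"
proof -
  have T: "planted_phylo_tree VT ET rT" "time_map VT ET \<tau>T"
    and S: "planted_phylo_tree VS ES rS" "time_map VS ES \<tau>S"
    and "L \<subseteq> VT" "\<sigma> ` L \<subseteq> VS"
    using assms(1) unfolding relaxed_scenario_def L_def leaves_def by auto
  define t where "t x y = \<tau>T (lca VT ET x y)" for x y
  define s where "s x y = \<tau>S (lca VS ES (\<sigma> x) (\<sigma> y))" for x y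
  have t: "ultrametric_on L t" and s: "ultrametric_on L s"
    using ultrametric_on_mono[OF ultrametric_on_lca_time[OF T] \<open>L \<subseteq> VT\<close>]
      ultrametric_on_compose[OF ultrametric_on_lca_time[OF S] \<open>\<sigma> ` L \<subseteq> VS\<close>]
    unfolding t_def s_def .
  have G: "Gl = comparison_graph L t s (<)" "Ge = comparison_graph L t s (=)"
      "Gg = comparison_graph L t s (>)"
    unfolding Gl_def Ge_def Gg_def L_def t_def s_def G_rel_eq_comparison_graph by simp_all
  then have G_swapped: "Gg = comparison_graph L s t (<)" "Ge = comparison_graph L s t (=)"
      "Gl = comparison_graph L s t (>)"
    by (simp_all add: comparison_graph_less_swap comparison_graph_eq_swap)
  have "agrees VT ET (R_T L Gl Ge Gg) (F_T L Gl Ge Gg)"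
  proof (rule agrees_antimono[OF agrees_image_R_T_F_T[OF t s,
        where f = "\<lambda>x. x" and Gl = Gl and Ge = Ge and Gg = Gg]])
    show "displays VT ET (x, y, z) \<longleftrightarrow> t x y < t x z" if "x \<in> L" "y \<in> L" "z \<in> L" for x y z
      using displays_iff_lca_time_less[OF T] that \<open>L \<subseteq> VT\<close> unfolding t_def by blast
  qed (simp_all add: G)
  moreover have "agrees VS ES (R_S L Gl Ge Gg \<sigma>) (F_S L Gl Ge Gg \<sigma>)"
  proof (rule agrees_antimono[OF agrees_image_R_T_F_T[OF s t, where f = \<sigma>]])
    show "displays VS ES (\<sigma> x, \<sigma> y, \<sigma> z) \<longleftrightarrow> s x y < s x z" if "x \<in> L" "y \<in> L" "z \<in> L" for x y z
      using displays_iff_lca_time_less[OF S] that \<open>\<sigma> ` L \<subseteq> VS\<close> unfolding s_def by blast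
  qed (unfold G_swapped, rule R_S_subset_image_R_T, rule F_S_subset_image_F_T)
  ultimately show ?thesis ..
qed

end
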